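(* The ring $D$ of entire functions (holomorphic functions $\mathbb C\to\mathbb C$) is completely integrally closed (so every nonzero ideal of $D$ is $v$-basic), but not every nonzero ideal of $D$ is $t$-basic.
   Context: For a domain $D$ with quotient field $K$ and nonzero fractional ideal $I$: $I^{-1}=(D:I)=\{x\in K:xI\subseteq D\}$, $I_v=(I^{-1})^{-1}$, $I_t=\bigcup J_v$ over finitely generated subideals $J\subseteq I$. For $\star\in\{v,t\}$ and a nonzero ideal $I$, an ideal $J\subseteq I$ is a $\star$-reduction of $I$ if $(JI^n)^\star=(I^{n+1})^\star$ for some integer $n\ge0$; $I$ is $\star$-basic if every $\star$-reduction $J$ of $I$ satisfies $J^\star=I^\star$. A domain is completely integrally closed iff every nonzero ideal $I$ satisfies $(II^{-1})_v=D$. *)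

theory Defs
  imports "HOL-Analysis.Analysis" "HOL-Library.Function_Algebras"
begin

text \<open>
  Elements of the quotient field K of D are
  written as fractions a/b with a, b in D and b nonzero; all conditions below are the
  literal meaning of the paper's definitions after clearing denominators
  (x = a/b lies in D iff b divides a in D).
\<close>

definition rdvd :: "'a::comm_ring_1 set \<Rightarrow> 'a \<Rightarrow> 'a \<Rightarrow> bool" where
  "rdvd D b a \<longleftrightarrow> (\<exists>c\<in>D. a = b * c)"

definition is_ideal :: "'a::comm_ring_1 set \<Rightarrow> 'a set \<Rightarrow> bool" where
  "is_ideal D I \<longleftrightarrow> I \<subseteq> D \<and> 0 \<in> I \<and> (\<forall>x\<in>I. \<forall>y\<in>I. x + y \<in> I)
      \<and> (\<forall>r\<in>D. \<forall>x\<in>I. r * x \<in> I)"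

definition ideal_gen :: "'a::comm_ring_1 set \<Rightarrow> 'a set \<Rightarrow> 'a set" where
  "ideal_gen D S = {x. \<exists>F c. finite F \<and> F \<subseteq> S \<and> (\<forall>f\<in>F. c f \<in> D) \<and> x = (\<Sum>f\<in>F. c f * f)}"

definition fin_gen_ideal :: "'a::comm_ring_1 set \<Rightarrow> 'a set \<Rightarrow> bool" where
  "fin_gen_ideal D J \<longleftrightarrow> (\<exists>F. finite F \<and> F \<subseteq> D \<and> J = ideal_gen D F)"

definition ideal_prod :: "'a::comm_ring_1 set \<Rightarrow> 'a set \<Rightarrow> 'a set \<Rightarrow> 'a set" where
  "ideal_prod D I J = ideal_gen D {i * j | i j. i \<in> I \<and> j \<in> J}"

fun ideal_pow :: "'a::comm_ring_1 set \<Rightarrow> 'a set \<Rightarrow> nat \<Rightarrow> 'a set" where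
  "ideal_pow D I 0 = D"
| "ideal_pow D I (Suc n) = ideal_prod D I (ideal_pow D I n)"

text \<open>Pairs (a,b) representing the elements a/b of the quotient field lying in
  I^{-1} = (D:I), i.e. with (a/b) I contained in D.\<close>
definition frac_inv :: "'a::comm_ring_1 set \<Rightarrow> 'a set \<Rightarrow> ('a \<times> 'a) set" where
  "frac_inv D I = {(a, b). a \<in> D \<and> b \<in> D \<and> b \<noteq> 0 \<and> (\<forall>i\<in>I. rdvd D b (a * i))}"

text \<open>v-closure of an integral ideal I: I_v = (I^{-1})^{-1}, which is contained in D
  (since 1 lies in I^{-1}); d lies in I_v iff d x lies in D for every x in I^{-1}.\<close>
definition v_closure :: "'a::comm_ring_1 set \<Rightarrow> 'a set \<Rightarrow> 'a set" where
  "v_closure D I = {d \<in> D. \<forall>(a, b)\<in>frac_inv D I. rdvd D b (a * d)}"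

definition t_closure :: "'a::comm_ring_1 set \<Rightarrow> 'a set \<Rightarrow> 'a set" where
  "t_closure D I = \<Union>{v_closure D J | J. fin_gen_ideal D J \<and> J \<subseteq> I}"

definition star_reduction ::
  "('a::comm_ring_1 set \<Rightarrow> 'a set \<Rightarrow> 'a set) \<Rightarrow> 'a set \<Rightarrow> 'a set \<Rightarrow> 'a set \<Rightarrow> bool" where
  "star_reduction st D J I \<longleftrightarrow> is_ideal D J \<and> J \<subseteq> I \<and>
     (\<exists>n. st D (ideal_prod D J (ideal_pow D I n)) = st D (ideal_pow D I (Suc n)))"

definition star_basic ::
  "('a::comm_ring_1 set \<Rightarrow> 'a set \<Rightarrow> 'a set) \<Rightarrow> 'a set \<Rightarrow> 'a set \<Rightarrow> bool" where
  "star_basic st D I \<longleftrightarrow> (\<forall>J. star_reduction st D J I \<longrightarrow> st D J = st D I)"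

text \<open>D is completely integrally closed: every almost integral element x = a/b of the
  quotient field (some nonzero d in D with d x^n in D for all n) lies in D.\<close>
definition completely_integrally_closed :: "'a::comm_ring_1 set \<Rightarrow> bool" where
  "completely_integrally_closed D \<longleftrightarrow>
     (\<forall>a\<in>D. \<forall>b\<in>D. b \<noteq> 0 \<longrightarrow>
        (\<exists>d\<in>D. d \<noteq> 0 \<and> (\<forall>n. rdvd D (b ^ n) (d * a ^ n))) \<longrightarrow> rdvd D b a)"

definition entire_functions :: "(complex \<Rightarrow> complex) set" where
  "entire_functions = {f. f holomorphic_on UNIV}"

end

theory Submission
  imports Defs "HOL-Complex_Analysis.Complex_Analysis"
begin

text \<open>
  In the ring of entire functions divisibility is governed by orders of zeros: b divides a
  iff \<open>ord_z b \<le> ord_z a\<close> at every point z. Every fraction of the quotient field that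
  multiplies an ideal I into D can be tested point by point against the powers
  \<open>(w - z)^k\<close>, so the v-closure of I is determined by the function
  \<open>z \<mapsto> min {ord_z a | a \<in> I, a \<noteq> 0}\<close>, which is additive under ideal products. Hence
  v-reductions can be cancelled and every nonzero ideal is v-basic; complete integral closure
  follows from the same order calculus (n ord b \<le> ord d + n ord a for all n forces
  ord b \<le> ord a).

  For the t-operation take the ideal I of entire functions whose order at every positive integer
  m is at least m - C for some constant C, and its subideal J of functions whose order at m is
  eventually at least m. Given f, g in I, an entire function p (Weierstrass) with zeros of order
  exactly m - C at the integers lies in I and divides f g with quotient in J, so JI = I^2.
  But the t-closure of J only contains functions of order eventually at least m, as a finitely
  generated subideal of J has a uniform such bound, whereas p with C = 1 lies in I.
\<close>

locale comm_subring =
  fixes D :: "'a::comm_ring_1 set"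
  assumes zero_mem [intro]: "0 \<in> D"
    and one_mem [intro]: "1 \<in> D"
    and add_mem [intro]: "x \<in> D \<Longrightarrow> y \<in> D \<Longrightarrow> x + y \<in> D"
    and mult_mem [intro]: "x \<in> D \<Longrightarrow> y \<in> D \<Longrightarrow> x * y \<in> D"
begin

lemma power_mem [intro]: "x \<in> D \<Longrightarrow> x ^ n \<in> D"
  by (induction n) auto

lemma sum_mem: "finite F \<Longrightarrow> (\<And>f. f \<in> F \<Longrightarrow> g f \<in> D) \<Longrightarrow> (\<Sum>f\<in>F. g f) \<in> D"
  by (induction F rule: finite_induct) auto

lemma rdvd_zero [intro]: "rdvd D a 0"
  unfolding rdvd_def by (rule bexI[of _ 0]) auto

lemma one_rdvd: "a \<in> D \<Longrightarrow> rdvd D 1 a"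
  unfolding rdvd_def by auto

lemma rdvd_mult_self: "r \<in> D \<Longrightarrow> rdvd D a (a * r)"
  unfolding rdvd_def by blast

lemma rdvd_trans: "rdvd D a b \<Longrightarrow> rdvd D b c \<Longrightarrow> rdvd D a c"
  unfolding rdvd_def by (metis mult_mem mult.assoc)

lemma rdvd_mult_left: "rdvd D a b \<Longrightarrow> r \<in> D \<Longrightarrow> rdvd D a (r * b)"
  unfolding rdvd_def by (metis mult_mem mult.left_commute)

lemma rdvd_add: "rdvd D a b \<Longrightarrow> rdvd D a c \<Longrightarrow> rdvd D a (b + c)"
  unfolding rdvd_def by (metis add_mem distrib_left)

lemma rdvd_mult_mult: "rdvd D a b \<Longrightarrow> rdvd D c d \<Longrightarrow> rdvd D (a * c) (b * d)"
  unfolding rdvd_def by (metis mult_mem mult.assoc mult.left_commute)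

lemma is_ideal_multiples: "is_ideal D {x \<in> D. rdvd D b x}"
  unfolding is_ideal_def by (auto intro: rdvd_add rdvd_mult_left)

lemma sum_mem_ideal:
  assumes "is_ideal D A" "finite F" "F \<subseteq> A" "\<forall>f\<in>F. c f \<in> D"
  shows "(\<Sum>f\<in>F. c f * f) \<in> A"
  using assms(2-) by (induction F rule: finite_induct) (use assms(1) in \<open>auto simp: is_ideal_def\<close>)

lemma ideal_gen_least: "is_ideal D A \<Longrightarrow> S \<subseteq> A \<Longrightarrow> ideal_gen D S \<subseteq> A"
  unfolding ideal_gen_def using sum_mem_ideal by blast

lemma ideal_gen_superset: "S \<subseteq> D \<Longrightarrow> S \<subseteq> ideal_gen D S"
proof
  fix s assume "S \<subseteq> D" "s \<in> S"
  then show "s \<in> ideal_gen D S" unfolding ideal_gen_def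
    by (intro CollectI exI[of _ "{s}"] exI[of _ "\<lambda>_. 1"]) auto
qed

lemma ideal_gen_subset: "S \<subseteq> D \<Longrightarrow> ideal_gen D S \<subseteq> D"
  unfolding ideal_gen_def by (auto intro!: sum_mem)

lemma ideal_gen_mono: "S \<subseteq> S' \<Longrightarrow> ideal_gen D S \<subseteq> ideal_gen D S'"
  unfolding ideal_gen_def by blast

lemma add_mem_ideal_gen:
  assumes "x \<in> ideal_gen D S" "y \<in> ideal_gen D S"
  shows "x + y \<in> ideal_gen D S"
proof -
  obtain F1 c1 F2 c2 where
    1: "finite F1" "F1 \<subseteq> S" "\<forall>f\<in>F1. c1 f \<in> D" "x = (\<Sum>f\<in>F1. c1 f * f)" and
    2: "finite F2" "F2 \<subseteq> S" "\<forall>f\<in>F2. c2 f \<in> D" "y = (\<Sum>f\<in>F2. c2 f * f)"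
    using assms unfolding ideal_gen_def by blast
  define c where "c f = (if f \<in> F1 then c1 f else 0) + (if f \<in> F2 then c2 f else 0)" for f
  have "(\<Sum>f\<in>F1 \<union> F2. c f * f) = (\<Sum>f\<in>F1 \<union> F2. if f \<in> F1 then c1 f * f else 0)
      + (\<Sum>f\<in>F1 \<union> F2. if f \<in> F2 then c2 f * f else 0)"
    unfolding sum.distrib[symmetric] by (intro sum.cong refl) (simp add: c_def distrib_right)
  also have "\<dots> = x + y"
    using 1 2 by (simp add: sum.If_cases Int_absorb1)
  finally have "x + y = (\<Sum>f\<in>F1 \<union> F2. c f * f)" ..
  moreover have "\<forall>f\<in>F1 \<union> F2. c f \<in> D" using 1 2 by (auto simp: c_def)
  ultimately show ?thesis unfolding ideal_gen_def
    using 1 2 by (intro CollectI exI[of _ "F1 \<union> F2"] exI[of _ c]) auto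
qed

lemma mult_mem_ideal_gen:
  assumes r: "r \<in> D" and "x \<in> ideal_gen D S"
  shows "r * x \<in> ideal_gen D S"
proof -
  obtain F c where F: "finite F" "F \<subseteq> S" "\<forall>f\<in>F. c f \<in> D" "x = (\<Sum>f\<in>F. c f * f)"
    using assms(2) unfolding ideal_gen_def by blast
  then have "r * x = (\<Sum>f\<in>F. (r * c f) * f)" by (simp add: sum_distrib_left mult.assoc)
  with F r show ?thesis unfolding ideal_gen_def
    by (intro CollectI exI[of _ F] exI[of _ "\<lambda>f. r * c f"]) auto
qed

lemma is_ideal_ideal_gen:
  assumes "S \<subseteq> D"
  shows "is_ideal D (ideal_gen D S)"
  unfolding is_ideal_def
proof (intro conjI ballI)
  show "0 \<in> ideal_gen D S" unfolding ideal_gen_def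
    by (intro CollectI exI[of _ "{}"]) auto
qed (auto intro: ideal_gen_subset[OF assms, THEN subsetD] add_mem_ideal_gen mult_mem_ideal_gen)

lemma rdvd_ideal_gen:
  "S \<subseteq> D \<Longrightarrow> (\<And>s. s \<in> S \<Longrightarrow> rdvd D b s) \<Longrightarrow> x \<in> ideal_gen D S \<Longrightarrow> rdvd D b x"
  using ideal_gen_least[OF is_ideal_multiples, of S b] by blast

lemma ideal_prod_subset: "A \<subseteq> D \<Longrightarrow> B \<subseteq> D \<Longrightarrow> ideal_prod D A B \<subseteq> D"
  unfolding ideal_prod_def by (rule ideal_gen_subset) auto

lemma mult_mem_ideal_prod: "A \<subseteq> D \<Longrightarrow> B \<subseteq> D \<Longrightarrow> a \<in> A \<Longrightarrow> b \<in> B \<Longrightarrow> a * b \<in> ideal_prod D A B"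
  unfolding ideal_prod_def by (rule ideal_gen_superset[THEN subsetD]) auto

lemma ideal_pow_subset: "A \<subseteq> D \<Longrightarrow> ideal_pow D A n \<subseteq> D"
  by (induction n) (auto intro: ideal_prod_subset[THEN subsetD])

lemma ideal_prod_carrier:
  assumes "is_ideal D I"
  shows "ideal_prod D I D = I"
proof
  show "ideal_prod D I D \<subseteq> I" unfolding ideal_prod_def
  proof (rule ideal_gen_least[OF assms], clarify)
    fix i j assume "i \<in> I" "j \<in> D"
    then show "i * j \<in> I" using assms by (simp add: is_ideal_def mult.commute[of i])
  qed
  show "I \<subseteq> ideal_prod D I D"
    using mult_mem_ideal_prod[of I D _ 1] assms by (auto simp: is_ideal_def)
qed

lemma ideal_pow_one: "is_ideal D I \<Longrightarrow> ideal_pow D I 1 = I"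
  by (simp add: ideal_prod_carrier)

lemma v_closure_superset: "A \<subseteq> D \<Longrightarrow> A \<subseteq> v_closure D A"
  unfolding v_closure_def frac_inv_def by auto

lemma t_closure_superset:
  assumes "is_ideal D I"
  shows "I \<subseteq> t_closure D I"
proof
  fix x assume x: "x \<in> I"
  with assms have xD: "x \<in> D" by (auto simp: is_ideal_def)
  define K where "K = ideal_gen D {x}"
  have "fin_gen_ideal D K" unfolding fin_gen_ideal_def K_def using xD by auto
  moreover have "K \<subseteq> I" unfolding K_def using x by (intro ideal_gen_least[OF assms]) auto
  moreover have "x \<in> v_closure D K"
    using ideal_gen_superset[of "{x}"] ideal_gen_subset[of "{x}"] v_closure_superset[of K] xD
    unfolding K_def by auto
  ultimately show "x \<in> t_closure D I" unfolding t_closure_def by blast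
qed

end

section \<open>Orders of zeros of entire functions\<close>

abbreviation \<O> :: "(complex \<Rightarrow> complex) set" where
  "\<O> \<equiv> entire_functions"

lemma entire_functions_iff: "f \<in> \<O> \<longleftrightarrow> f holomorphic_on UNIV"
  by (simp add: entire_functions_def)

interpretation entire: comm_subring \<O>
  by unfold_locales (auto simp: entire_functions_iff zero_fun_def one_fun_def plus_fun_def
      times_fun_def intro!: holomorphic_intros)

lemma entire_analytic_on: "f \<in> \<O> \<Longrightarrow> f analytic_on A"
  by (metis entire_functions_iff analytic_on_holomorphic open_UNIV subset_UNIV)

lemma entire_eventually_nonzero:
  assumes "f \<in> \<O>" "f \<noteq> 0"
  shows "eventually (\<lambda>w. f w \<noteq> 0) (at z)"
proof -
  obtain b where "f b \<noteq> 0" using assms(2) by (auto simp: fun_eq_iff)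
  with non_zero_neighbour_alt[of f UNIV z b] assms(1) show ?thesis
    by (auto simp: entire_functions_iff elim: eventually_mono)
qed

lemma entire_frequently_nonzero: "f \<in> \<O> \<Longrightarrow> f \<noteq> 0 \<Longrightarrow> frequently (\<lambda>w. f w \<noteq> 0) (at z)"
  by (metis entire_eventually_nonzero eventually_frequently at_neq_bot)

lemma entire_mult_nonzero:
  assumes "f \<in> \<O>" "g \<in> \<O>" "f \<noteq> 0" "g \<noteq> 0"
  shows "f * g \<noteq> 0"
proof -
  have "eventually (\<lambda>w. f w \<noteq> 0 \<and> g w \<noteq> 0) (at 0)"
    using entire_eventually_nonzero assms by (simp add: eventually_conj_iff)
  then obtain w where "f w \<noteq> 0" "g w \<noteq> 0" using eventually_happens'[OF at_neq_bot] by blast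
  then show ?thesis by (auto simp: fun_eq_iff)
qed

lemma entire_power_nonzero:
  assumes "f \<in> \<O>" "f \<noteq> 0"
  shows "f ^ n \<noteq> 0"
proof (induction n)
  case (Suc n)
  then show ?case
    using entire_mult_nonzero[OF assms(1) entire.power_mem[OF assms(1)] assms(2)] by (metis power_Suc)
qed (simp add: fun_eq_iff)

lemma zorder_entire_nonneg: "f \<in> \<O> \<Longrightarrow> f \<noteq> 0 \<Longrightarrow> zorder f z \<ge> 0"
  by (intro zorder_ge_0 entire_analytic_on entire_frequently_nonzero)

lemma zorder_entire_pos_iff: "f \<in> \<O> \<Longrightarrow> f \<noteq> 0 \<Longrightarrow> zorder f z > 0 \<longleftrightarrow> f z = 0"
  by (intro zorder_pos_iff' entire_analytic_on entire_frequently_nonzero)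

lemma zorder_entire_mult:
  assumes "f \<in> \<O>" "g \<in> \<O>" "f \<noteq> 0" "g \<noteq> 0"
  shows "zorder (f * g) z = zorder f z + zorder g z"
proof -
  have "eventually (\<lambda>w. f w * g w \<noteq> 0) (at z)"
    using entire_eventually_nonzero assms by (simp add: eventually_conj_iff)
  then show ?thesis unfolding times_fun_def
    by (intro zorder_times_analytic entire_analytic_on assms)
qed

lemma zorder_entire_power:
  assumes "f \<in> \<O>" "f \<noteq> 0"
  shows "zorder (f ^ n) z = n * zorder f z"
proof -
  have "f ^ n = (\<lambda>w. f w ^ n)" by (induction n) (auto simp: fun_eq_iff)
  then show ?thesis
    using zorder_power[of f z n] entire_analytic_on[OF assms(1)] entire_frequently_nonzero[OF assms]
      analytic_on_imp_meromorphic_on by auto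
qed

lemma entire_quotient:
  assumes a: "a \<in> \<O>" "a \<noteq> 0" and b: "b \<in> \<O>" "b \<noteq> 0"
    and le: "\<And>z. zorder b z \<le> zorder a z"
  shows "rdvd \<O> b a"
proof -
  define q where "q = (\<lambda>w. a w / b w)"
  have "remove_sings q analytic_on {z}" for z
  proof -
    have "q meromorphic_on {z}"
      unfolding q_def using entire_analytic_on[OF a(1)] entire_analytic_on[OF b(1)]
      by (intro meromorphic_intros analytic_on_imp_meromorphic_on)
    then have iso: "isolated_singularity_at q z" and ess: "not_essential q z"
      using meromorphic_at_iff by auto
    have "zorder q z = zorder a z - zorder b z" unfolding q_def
      by (intro zorder_divide analytic_on_imp_meromorphic_on entire_analytic_on
          entire_frequently_nonzero a b)
    with le[of z] have "\<not> is_pole q z"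
      using isolated_pole_imp_neg_zorder[OF iso] by fastforce
    with ess obtain c where "q \<midarrow>z\<rightarrow> c" unfolding not_essential_def by auto
    then show ?thesis using remove_sings_analytic_at[OF iso] by blast
  qed
  then have "remove_sings q \<in> \<O>"
    unfolding entire_functions_iff using analytic_imp_holomorphic analytic_on_analytic_at by blast
  moreover have "a w = b w * remove_sings q w" for w
  proof (cases "b w = 0")
    case True
    then have "zorder a w > 0"
      using le[of w] zorder_entire_pos_iff[OF b] by (meson less_le_trans)
    with True show ?thesis using zorder_entire_pos_iff[OF a] by simp
  next
    case False
    then have "q analytic_on {w}" unfolding q_def
      using entire_analytic_on[OF a(1)] entire_analytic_on[OF b(1)] by (intro analytic_intros) auto
    with False show ?thesis by (simp add: q_def)
  qed
  ultimately show ?thesis by (auto simp: rdvd_def fun_eq_iff)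
qed

lemma entire_rdvd_iff_zorder_le:
  assumes a: "a \<in> \<O>" "a \<noteq> 0" and b: "b \<in> \<O>" "b \<noteq> 0"
  shows "rdvd \<O> b a \<longleftrightarrow> (\<forall>z. zorder b z \<le> zorder a z)"
proof
  assume "rdvd \<O> b a"
  then obtain c where c: "c \<in> \<O>" "a = b * c" by (auto simp: rdvd_def)
  with a have "c \<noteq> 0" by auto
  with b c show "\<forall>z. zorder b z \<le> zorder a z"
    by (simp add: zorder_entire_mult zorder_entire_nonneg)
qed (use entire_quotient[OF a b] in blast)

definition root_power :: "complex \<Rightarrow> nat \<Rightarrow> complex \<Rightarrow> complex" where
  "root_power z k = (\<lambda>w. (w - z) ^ k)"

lemma root_power_entire [intro]: "root_power z k \<in> \<O>"
  unfolding root_power_def entire_functions_iff by (intro holomorphic_intros)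

lemma root_power_nonzero: "root_power z k \<noteq> 0"
  by (auto simp: root_power_def fun_eq_iff intro!: exI[of _ "z + 1"])

lemma root_power_0: "root_power z 0 = 1"
  by (simp add: root_power_def one_fun_def)

lemma root_power_add: "root_power z (k + l) = root_power z k * root_power z l"
  by (simp add: root_power_def fun_eq_iff power_add)

lemma rdvd_root_power_mono: "l \<le> k \<Longrightarrow> rdvd \<O> (root_power z l) (root_power z k)"
  by (metis le_add_diff_inverse root_power_add root_power_entire entire.rdvd_mult_self)

lemma zorder_root_power: "zorder (root_power z k) w = (if w = z then int k else 0)"
proof (cases "w = z")
  case True
  have "zorder (root_power z k) z = int k"
    unfolding root_power_def
    by (rule zorder_eqI[where S=UNIV and g="\<lambda>_. 1"]) (auto simp: power_int_def)
  with True show ?thesis by simp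
next
  case False
  then show ?thesis
    using entire_analytic_on[OF root_power_entire] by (auto simp: root_power_def intro!: zorder_eq_0I)
qed

lemma rdvd_root_power_iff:
  assumes "f \<in> \<O>" "f \<noteq> 0"
  shows "rdvd \<O> (root_power z k) f \<longleftrightarrow> int k \<le> zorder f z"
  using entire_rdvd_iff_zorder_le[OF assms root_power_entire root_power_nonzero]
    zorder_root_power zorder_entire_nonneg[OF assms] by (metis (full_types))

lemma entire_completely_integrally_closed: "completely_integrally_closed \<O>"
  unfolding completely_integrally_closed_def
proof (intro ballI impI)
  fix a b assume a: "a \<in> \<O>" and b: "b \<in> \<O>" "b \<noteq> 0"
    and "\<exists>d\<in>\<O>. d \<noteq> 0 \<and> (\<forall>n. rdvd \<O> (b ^ n) (d * a ^ n))"
  then obtain d where d: "d \<in> \<O>" "d \<noteq> 0" and dvd: "\<And>n. rdvd \<O> (b ^ n) (d * a ^ n)" by auto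
  show "rdvd \<O> b a"
  proof (cases "a = 0")
    case False
    have "zorder b z \<le> zorder a z" for z
    proof (rule ccontr)
      assume lt: "\<not> ?thesis"
      define N where "N = Suc (nat (zorder d z))"
      have aN: "a ^ N \<in> \<O>" "a ^ N \<noteq> 0" using a False entire_power_nonzero by auto
      have "d * a ^ N \<noteq> 0" using d aN entire_mult_nonzero by auto
      then have "zorder (b ^ N) z \<le> zorder (d * a ^ N) z"
        using dvd[of N] entire_rdvd_iff_zorder_le b d aN entire_power_nonzero by blast
      then have "N * zorder b z \<le> zorder d z + N * zorder a z"
        using zorder_entire_mult[OF d(1) aN(1) d(2) aN(2)] zorder_entire_power a b False by simp
      moreover have "int N * (zorder a z + 1) \<le> int N * zorder b z"
        using lt by (intro mult_left_mono) auto
      moreover have "zorder d z < int N" unfolding N_def by linarith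
      ultimately show False by (simp add: algebra_simps)
    qed
    then show ?thesis using entire_rdvd_iff_zorder_le[OF a False b] by auto
  qed auto
qed

section \<open>The v-operation\<close>

text \<open>A fraction a/b in \<open>I\<inverse>\<close> is tested one zero at a time: at z it suffices to know
  that \<open>(w - z)^k\<close> with \<open>k = ord_z b - ord_z a\<close> divides every member of I.\<close>

lemma frac_inv_rdvd_of_root_power_tests:
  assumes AD: "A \<subseteq> \<O>" and ab: "(a, b) \<in> frac_inv \<O> A" and dD: "d \<in> \<O>"
    and tests: "\<And>z k. \<forall>i\<in>A. rdvd \<O> (root_power z k) i \<Longrightarrow> rdvd \<O> (root_power z k) d"
  shows "rdvd \<O> b (a * d)"
proof (cases "a * d = 0")
  case False
  from ab have a: "a \<in> \<O>" "a \<noteq> 0" and b: "b \<in> \<O>" "b \<noteq> 0"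
    and bA: "\<forall>i\<in>A. rdvd \<O> b (a * i)" using False by (auto simp: frac_inv_def)
  have d0: "d \<noteq> 0" using False by auto
  have "zorder b z \<le> zorder (a * d) z" for z
  proof -
    define k where "k = nat (zorder b z - zorder a z)"
    have "rdvd \<O> (root_power z k) i" if i: "i \<in> A" "i \<noteq> 0" for i
    proof -
      have iD: "i \<in> \<O>" using i AD by auto
      have "a * i \<noteq> 0" using entire_mult_nonzero a iD i by auto
      then have "zorder b z \<le> zorder (a * i) z"
        using bA i entire_rdvd_iff_zorder_le[of "a * i" b] a iD b by auto
      then show ?thesis
        using zorder_entire_mult[OF a(1) iD a(2) i(2)] zorder_entire_nonneg[OF iD i(2), of z]
          rdvd_root_power_iff[OF iD i(2)] unfolding k_def by auto
    qed
    then have "rdvd \<O> (root_power z k) d"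
      using tests by (metis entire.rdvd_zero)
    then show ?thesis
      using rdvd_root_power_iff[OF dD d0] zorder_entire_mult[OF a(1) dD a(2) d0]
        zorder_entire_nonneg[OF dD d0, of z] unfolding k_def by (auto split: if_splits)
  qed
  moreover have "a * d \<in> \<O>" using a(1) dD by auto
  ultimately show ?thesis using entire_rdvd_iff_zorder_le[OF _ False b] by blast
qed auto

lemma mem_v_closure_iff:
  assumes "A \<subseteq> \<O>"
  shows "d \<in> v_closure \<O> A \<longleftrightarrow>
    d \<in> \<O> \<and> (\<forall>z k. (\<forall>a\<in>A. rdvd \<O> (root_power z k) a) \<longrightarrow> rdvd \<O> (root_power z k) d)"
proof
  assume d: "d \<in> v_closure \<O> A"
  have "rdvd \<O> (root_power z k) d" if "\<forall>a\<in>A. rdvd \<O> (root_power z k) a" for z k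
  proof -
    have "(1, root_power z k) \<in> frac_inv \<O> A"
      unfolding frac_inv_def using that root_power_nonzero by auto
    with d show ?thesis unfolding v_closure_def by auto
  qed
  with d show "d \<in> \<O> \<and> (\<forall>z k. (\<forall>a\<in>A. rdvd \<O> (root_power z k) a) \<longrightarrow> rdvd \<O> (root_power z k) d)"
    by (auto simp: v_closure_def)
qed (use assms frac_inv_rdvd_of_root_power_tests in \<open>auto simp: v_closure_def\<close>)

lemma v_closure_eq_iff:
  assumes "A \<subseteq> \<O>" "B \<subseteq> \<O>"
  shows "v_closure \<O> A = v_closure \<O> B \<longleftrightarrow>
    (\<forall>z k. (\<forall>a\<in>A. rdvd \<O> (root_power z k) a) \<longleftrightarrow> (\<forall>b\<in>B. rdvd \<O> (root_power z k) b))"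
proof
  assume eq: "v_closure \<O> A = v_closure \<O> B"
  have "\<forall>b\<in>B. rdvd \<O> (root_power z k) b" if "\<forall>a\<in>A. rdvd \<O> (root_power z k) a"
    "A \<subseteq> \<O>" "B \<subseteq> \<O>" "v_closure \<O> A = v_closure \<O> B" for A B z k
    using that entire.v_closure_superset[of B] mem_v_closure_iff[of A] by auto
  from this[OF _ assms eq] this[OF _ assms(2,1) eq[symmetric]]
  show "\<forall>z k. (\<forall>a\<in>A. rdvd \<O> (root_power z k) a) \<longleftrightarrow> (\<forall>b\<in>B. rdvd \<O> (root_power z k) b)"
    by blast
qed (use assms mem_v_closure_iff in auto)

text \<open>The order of an ideal at z: the least order of zero at z of its nonzero members.\<close>

definition ideal_zorder :: "(complex \<Rightarrow> complex) set \<Rightarrow> complex \<Rightarrow> nat" where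
  "ideal_zorder A z = Max {k. \<forall>a\<in>A. rdvd \<O> (root_power z k) a}"

lemma root_power_rdvd_all_iff:
  assumes "A \<subseteq> \<O>" "a \<in> A" "a \<noteq> 0"
  shows "(\<forall>a\<in>A. rdvd \<O> (root_power z k) a) \<longleftrightarrow> k \<le> ideal_zorder A z"
proof -
  let ?K = "{k. \<forall>a\<in>A. rdvd \<O> (root_power z k) a}"
  have "?K \<subseteq> {..nat (zorder a z)}"
    using assms rdvd_root_power_iff[of a] by fastforce
  then have fin: "finite ?K" by (rule finite_subset) simp
  have "0 \<in> ?K" using assms(1) entire.one_rdvd by (auto simp: root_power_0)
  then have "ideal_zorder A z \<in> ?K" unfolding ideal_zorder_def using fin by (intro Max_in) auto
  moreover have "l \<in> ?K" if "l \<le> k" "k \<in> ?K" for l k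
    using that rdvd_root_power_mono entire.rdvd_trans by blast
  ultimately show ?thesis
    using fin unfolding ideal_zorder_def by auto
qed

lemma v_closure_eq_iff_ideal_zorder:
  assumes "A \<subseteq> \<O>" "a \<in> A" "a \<noteq> 0" "B \<subseteq> \<O>" "b \<in> B" "b \<noteq> 0"
  shows "v_closure \<O> A = v_closure \<O> B \<longleftrightarrow> (\<forall>z. ideal_zorder A z = ideal_zorder B z)"
  unfolding v_closure_eq_iff[OF assms(1,4)] root_power_rdvd_all_iff[OF assms(1-3)]
    root_power_rdvd_all_iff[OF assms(4-6)]
  by (metis le_antisym order_refl)

lemma ideal_zorder_prod:
  assumes AD: "A \<subseteq> \<O>" and BD: "B \<subseteq> \<O>" and a: "a \<in> A" "a \<noteq> 0" and b: "b \<in> B" "b \<noteq> 0"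
  shows "ideal_zorder (ideal_prod \<O> A B) z = ideal_zorder A z + ideal_zorder B z"
proof -
  let ?P = "ideal_prod \<O> A B" and ?m = "ideal_zorder A z" and ?n = "ideal_zorder B z"
  have PD: "?P \<subseteq> \<O>" by (rule entire.ideal_prod_subset[OF AD BD])
  have ab: "a * b \<in> ?P" "a * b \<noteq> 0"
    using entire.mult_mem_ideal_prod[OF AD BD a(1) b(1)] entire_mult_nonzero[of a b] AD BD a b
    by auto
  note P_iff = root_power_rdvd_all_iff[OF PD ab]
    and A_iff = root_power_rdvd_all_iff[OF AD a]
    and B_iff = root_power_rdvd_all_iff[OF BD b]
  have "rdvd \<O> (root_power z (?m + ?n)) x" if "x \<in> ?P" for x
  proof (rule entire.rdvd_ideal_gen[OF _ _ that[unfolded ideal_prod_def]])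
    show "{i * j |i j. i \<in> A \<and> j \<in> B} \<subseteq> \<O>" using AD BD by auto
  next
    fix s assume "s \<in> {i * j |i j. i \<in> A \<and> j \<in> B}"
    then obtain i j where s: "s = i * j" "i \<in> A" "j \<in> B" by blast
    then have "rdvd \<O> (root_power z ?m) i" "rdvd \<O> (root_power z ?n) j"
      using A_iff[of z ?m] B_iff[of z ?n] by auto
    then show "rdvd \<O> (root_power z (?m + ?n)) s"
      unfolding root_power_add s by (rule entire.rdvd_mult_mult)
  qed
  then have ge: "?m + ?n \<le> ideal_zorder ?P z" using P_iff by auto
  obtain a0 where a0: "a0 \<in> A" "\<not> rdvd \<O> (root_power z (Suc ?m)) a0"
    using A_iff[of z "Suc ?m"] by auto
  obtain b0 where b0: "b0 \<in> B" "\<not> rdvd \<O> (root_power z (Suc ?n)) b0"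
    using B_iff[of z "Suc ?n"] by auto
  have a0D: "a0 \<in> \<O>" "a0 \<noteq> 0" and b0D: "b0 \<in> \<O>" "b0 \<noteq> 0" using a0 b0 AD BD by auto
  have "a0 * b0 \<in> ?P" using entire.mult_mem_ideal_prod AD BD a0 b0 by blast
  moreover have "a0 * b0 \<noteq> 0" using entire_mult_nonzero a0D b0D by auto
  ultimately have "int (ideal_zorder ?P z) \<le> zorder (a0 * b0) z"
    using P_iff[of z "ideal_zorder ?P z"] rdvd_root_power_iff[of "a0 * b0"] PD by blast
  also have "\<dots> = zorder a0 z + zorder b0 z" by (rule zorder_entire_mult[OF a0D(1) b0D(1) a0D(2) b0D(2)])
  finally have "int (ideal_zorder ?P z) \<le> zorder a0 z + zorder b0 z" .
  moreover have "zorder a0 z \<le> int ?m" "zorder b0 z \<le> int ?n"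
    using a0(2) b0(2) rdvd_root_power_iff[OF a0D, of z] rdvd_root_power_iff[OF b0D, of z] by auto
  ultimately show ?thesis using ge by linarith
qed

lemma ideal_pow_nonzero:
  assumes "A \<subseteq> \<O>" "a \<in> A" "a \<noteq> 0"
  shows "\<exists>x\<in>ideal_pow \<O> A n. x \<noteq> 0"
proof (induction n)
  case 0
  show ?case by (intro bexI[of _ 1]) (auto simp: fun_eq_iff)
next
  case (Suc n)
  then obtain x where x: "x \<in> ideal_pow \<O> A n" "x \<noteq> 0" by blast
  then have "a * x \<noteq> 0"
    using entire.ideal_pow_subset[OF assms(1)] entire_mult_nonzero[of a x] assms by blast
  moreover have "a * x \<in> ideal_pow \<O> A (Suc n)"
    using entire.mult_mem_ideal_prod[OF assms(1) entire.ideal_pow_subset[OF assms(1)] assms(2) x(1)]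
    by simp
  ultimately show ?case by blast
qed

theorem entire_v_basic:
  assumes I: "is_ideal \<O> I" "I \<noteq> {0}"
  shows "star_basic v_closure \<O> I"
  unfolding star_basic_def
proof (intro allI impI)
  fix J assume "star_reduction v_closure \<O> J I"
  then obtain n where J: "is_ideal \<O> J" "J \<subseteq> I"
    and eq: "v_closure \<O> (ideal_prod \<O> J (ideal_pow \<O> I n))
           = v_closure \<O> (ideal_prod \<O> I (ideal_pow \<O> I n))"
    by (auto simp: star_reduction_def)
  define K where "K = ideal_pow \<O> I n"
  have ID: "I \<subseteq> \<O>" and JD: "J \<subseteq> \<O>" and KD: "K \<subseteq> \<O>"
    using I J entire.ideal_pow_subset by (auto simp: is_ideal_def K_def)
  let ?JK = "ideal_prod \<O> J K" and ?IK = "ideal_prod \<O> I K"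
  have JKD: "?JK \<subseteq> \<O>" and IKD: "?IK \<subseteq> \<O>"
    using entire.ideal_prod_subset JD ID KD by auto
  have eqK: "v_closure \<O> ?JK = v_closure \<O> ?IK" using eq by (simp add: K_def)
  obtain i0 where i0: "i0 \<in> I" "i0 \<noteq> 0" using I by (auto simp: is_ideal_def)
  obtain x where x: "x \<in> K" "x \<noteq> 0" using ideal_pow_nonzero[OF ID i0] by (auto simp: K_def)
  have i0x: "i0 * x \<in> ?IK" "i0 * x \<noteq> 0"
    using entire.mult_mem_ideal_prod[OF ID KD i0(1) x(1)] entire_mult_nonzero[of i0 x] ID KD i0 x
    by auto
  have "\<exists>j\<in>J. j \<noteq> 0"
  proof (rule ccontr)
    assume none: "\<not> (\<exists>j\<in>J. j \<noteq> 0)"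
    have "rdvd \<O> (root_power 0 k) y" if "y \<in> ?JK" for y k
    proof (rule entire.rdvd_ideal_gen[OF _ _ that[unfolded ideal_prod_def]])
      show "{i * j |i j. i \<in> J \<and> j \<in> K} \<subseteq> \<O>" using JD KD by auto
    next
      fix s assume "s \<in> {i * j |i j. i \<in> J \<and> j \<in> K}"
      then have "s = 0" using none by auto
      then show "rdvd \<O> (root_power 0 k) s" by (simp add: entire.rdvd_zero)
    qed
    then have "\<forall>y\<in>?IK. rdvd \<O> (root_power 0 k) y" for k
      using eqK v_closure_eq_iff[OF JKD IKD] by blast
    then show False
      using root_power_rdvd_all_iff[OF IKD i0x, of 0 "Suc (ideal_zorder ?IK 0)"] by simp
  qed
  then obtain j0 where j0: "j0 \<in> J" "j0 \<noteq> 0" by blast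
  have j0x: "j0 * x \<in> ?JK" "j0 * x \<noteq> 0"
    using entire.mult_mem_ideal_prod[OF JD KD j0(1) x(1)] entire_mult_nonzero[of j0 x] JD KD j0 x
    by auto
  have "ideal_zorder ?JK z = ideal_zorder ?IK z" for z
    using eqK v_closure_eq_iff_ideal_zorder[OF JKD j0x IKD i0x] by blast
  then have "ideal_zorder J z = ideal_zorder I z" for z
    using ideal_zorder_prod[OF JD KD j0 x] ideal_zorder_prod[OF ID KD i0 x] by simp
  then show "v_closure \<O> J = v_closure \<O> I"
    using v_closure_eq_iff_ideal_zorder[OF JD j0 ID i0] by blast
qed

section \<open>An ideal that is not t-basic\<close>

lemma entire_with_prescribed_zeros:
  fixes \<mu> :: "nat \<Rightarrow> nat"
  assumes \<mu>0: "\<mu> 0 = 0" and inf: "infinite {m. \<mu> m > 0}"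
  obtains f where "f \<in> \<O>" "f \<noteq> 0" "\<And>w. f w = 0 \<Longrightarrow> w \<in> \<nat>" "\<And>m. zorder f (of_nat m) = \<mu> m"
proof -
  define A :: "complex set" where "A = of_nat ` {m. \<mu> m > 0}"
  define c where "c z = \<mu> (nat \<lfloor>Re z\<rfloor>)" for z :: complex
  have "infinite A" unfolding A_def using inf by (auto dest: finite_imageD simp: inj_on_def)
  moreover have "closed A" unfolding A_def by (rule closed_of_nat_image)
  moreover have "finite (A \<inter> cball 0 r)" for r
  proof (rule finite_subset)
    have "m \<le> nat \<lceil>r\<rceil>" if "real m \<le> r" for m
      using that by linarith
    then show "A \<inter> cball 0 r \<subseteq> of_nat ` {..nat \<lceil>r\<rceil>}"
      by (auto simp: A_def)
  qed simp
  moreover have "c z > 0" if "z \<in> A" for z using that by (auto simp: A_def c_def)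
  ultimately obtain a :: "nat \<Rightarrow> complex" where "mono (norm \<circ> a)"
    and a: "range a = A" "filterlim a at_infinity at_top"
      "\<And>z. z \<in> A \<Longrightarrow> finite (a -` {z}) \<and> card (a -` {z}) = c z"
    by (rule sequence_of_sparse_set_exists') auto
  have "0 \<notin> A" using \<mu>0 by (auto simp: A_def)
  interpret W: weierstrass_product' a
    by unfold_locales (use a \<open>0 \<notin> A\<close> in \<open>auto dest: range_eqI\<close>)
  show ?thesis
  proof (rule that)
    show "W.f \<in> \<O>" unfolding entire_functions_iff by (rule W.holomorphic)
    show zeros: "w \<in> \<nat>" if "W.f w = 0" for w
      using that W.zero a(1) by (auto simp: A_def)
    show "zorder W.f (of_nat m) = \<mu> m" for m
    proof (cases "\<mu> m > 0")
      case True
      then show ?thesis using a(3)[of "of_nat m"] W.zorder by (auto simp: A_def c_def)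
    next
      case False
      then have "of_nat m \<notin> A" by (auto simp: A_def)
      then have "a -` {of_nat m} = {}"
        using a(1) by (metis empty_iff rangeI subsetI subset_antisym vimage_singleton_eq)
      then show ?thesis using False W.zorder by simp
    qed
    show "W.f \<noteq> 0" using W.zero a(1) \<open>0 \<notin> A\<close> by (metis zero_fun_apply)
  qed
qed

text \<open>The ideal I: order at least m - C at every natural number m, for some C (for m = 0 the
  condition is void since \<open>0 - C = 0\<close>), and its subideal J: order eventually at least m.\<close>

definition linear_zeros_ideal :: "(complex \<Rightarrow> complex) set" where
  "linear_zeros_ideal = {f \<in> \<O>. \<exists>C. \<forall>m. rdvd \<O> (root_power (of_nat m) (m - C)) f}"

definition eventual_linear_zeros_ideal :: "(complex \<Rightarrow> complex) set" where
  "eventual_linear_zeros_ideal =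
    {f \<in> linear_zeros_ideal. \<forall>\<^sub>F m in sequentially. rdvd \<O> (root_power (of_nat m) m) f}"

lemma is_ideal_linear_zeros_ideal: "is_ideal \<O> linear_zeros_ideal"
  unfolding is_ideal_def
proof (intro conjI ballI)
  fix x y assume "x \<in> linear_zeros_ideal" "y \<in> linear_zeros_ideal"
  then obtain C1 C2 where x: "x \<in> \<O>" "\<And>m. rdvd \<O> (root_power (of_nat m) (m - C1)) x"
    and y: "y \<in> \<O>" "\<And>m. rdvd \<O> (root_power (of_nat m) (m - C2)) y"
    by (auto simp: linear_zeros_ideal_def)
  have "rdvd \<O> (root_power (of_nat m) (m - max C1 C2)) (x + y)" for m
    using x(2)[of m] y(2)[of m]
    by (meson diff_le_mono2 max.cobounded1 max.cobounded2 rdvd_root_power_mono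
        entire.rdvd_trans entire.rdvd_add)
  with x y show "x + y \<in> linear_zeros_ideal" by (auto simp: linear_zeros_ideal_def)
qed (auto simp: linear_zeros_ideal_def intro: entire.rdvd_mult_left)

lemma is_ideal_eventual_linear_zeros_ideal: "is_ideal \<O> eventual_linear_zeros_ideal"
  unfolding is_ideal_def
proof (intro conjI ballI)
  fix x y assume xy: "x \<in> eventual_linear_zeros_ideal" "y \<in> eventual_linear_zeros_ideal"
  then have "x + y \<in> linear_zeros_ideal"
    using is_ideal_linear_zeros_ideal by (auto simp: eventual_linear_zeros_ideal_def is_ideal_def)
  moreover have "\<forall>\<^sub>F m in sequentially. rdvd \<O> (root_power (of_nat m) m) x"
    "\<forall>\<^sub>F m in sequentially. rdvd \<O> (root_power (of_nat m) m) y"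
    using xy by (auto simp: eventual_linear_zeros_ideal_def)
  then have "\<forall>\<^sub>F m in sequentially. rdvd \<O> (root_power (of_nat m) m) (x + y)"
    by eventually_elim (rule entire.rdvd_add)
  ultimately show "x + y \<in> eventual_linear_zeros_ideal"
    by (simp add: eventual_linear_zeros_ideal_def)
next
  fix r x assume rx: "r \<in> \<O>" "x \<in> eventual_linear_zeros_ideal"
  then have "r * x \<in> linear_zeros_ideal"
    using is_ideal_linear_zeros_ideal by (auto simp: eventual_linear_zeros_ideal_def is_ideal_def)
  moreover have "\<forall>\<^sub>F m in sequentially. rdvd \<O> (root_power (of_nat m) m) x"
    using rx by (auto simp: eventual_linear_zeros_ideal_def)
  then have "\<forall>\<^sub>F m in sequentially. rdvd \<O> (root_power (of_nat m) m) (r * x)"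
    by eventually_elim (rule entire.rdvd_mult_left[OF _ rx(1)])
  ultimately show "r * x \<in> eventual_linear_zeros_ideal"
    by (simp add: eventual_linear_zeros_ideal_def)
qed (use is_ideal_linear_zeros_ideal in
      \<open>auto simp: eventual_linear_zeros_ideal_def is_ideal_def entire.rdvd_zero\<close>)

lemma mem_linear_zeros_ideal_iff:
  assumes "f \<in> \<O>" "f \<noteq> 0"
  shows "f \<in> linear_zeros_ideal \<longleftrightarrow> (\<exists>C. \<forall>m. int (m - C) \<le> zorder f (of_nat m))"
  using assms rdvd_root_power_iff[OF assms] by (simp add: linear_zeros_ideal_def)

lemma shifted_zeros_function:
  fixes C :: nat
  obtains p where "p \<in> \<O>" "p \<noteq> 0" "\<And>w. p w = 0 \<Longrightarrow> w \<in> \<nat>"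
    "\<And>m. zorder p (of_nat m) = int (m - C)"
proof (rule entire_with_prescribed_zeros)
  have "{m. m - C > 0} = {Suc C..}" by auto
  then show "infinite {m. m - C > (0::nat)}" using infinite_Ici by auto
qed (use that in auto)

text \<open>If f and g have orders at least m - C1 and m - C2 at m, take p of order exactly
  m - C1 - C2 at m and zero-free elsewhere; then f g / p has order at least m from m = C1 + C2 on.\<close>

lemma linear_zeros_product_factor:
  assumes f: "f \<in> linear_zeros_ideal" and g: "g \<in> linear_zeros_ideal" and fg: "f * g \<noteq> 0"
  obtains j p where "j \<in> eventual_linear_zeros_ideal" "p \<in> linear_zeros_ideal" "f * g = j * p"
proof -
  have fD: "f \<in> \<O>" "f \<noteq> 0" and gD: "g \<in> \<O>" "g \<noteq> 0" and fgD: "f * g \<in> \<O>"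
    using f g fg by (auto simp: linear_zeros_ideal_def)
  obtain C1 C2 where C1: "\<And>m. int (m - C1) \<le> zorder f (of_nat m)"
    and C2: "\<And>m. int (m - C2) \<le> zorder g (of_nat m)"
    using f g mem_linear_zeros_ideal_iff[OF fD] mem_linear_zeros_ideal_iff[OF gD] by auto
  define C where "C = C1 + C2"
  have ord_fg: "int (m - C1) + int (m - C2) \<le> zorder (f * g) (of_nat m)" for m
    using C1[of m] C2[of m] zorder_entire_mult[OF fD(1) gD(1) fD(2) gD(2)] by simp
  obtain p where pD: "p \<in> \<O>" "p \<noteq> 0" and p_zeros: "\<And>w. p w = 0 \<Longrightarrow> w \<in> \<nat>"
    and ord_p: "\<And>m. zorder p (of_nat m) = int (m - C)"
    using shifted_zeros_function[of C] by blast
  have "zorder p w \<le> zorder (f * g) w" for w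
  proof (cases "p w = 0")
    case True
    then obtain m where "w = of_nat m" using p_zeros Nats_cases by metis
    then show ?thesis using ord_fg[of m] ord_p[of m] by (simp add: C_def)
  next
    case False
    then show ?thesis
      using zorder_entire_pos_iff[OF pD] zorder_entire_nonneg[OF pD] zorder_entire_nonneg[OF fgD fg]
      by (metis not_less order.antisym)
  qed
  then obtain j where jD: "j \<in> \<O>" and fgj: "f * g = p * j"
    using entire_rdvd_iff_zorder_le[OF fgD fg pD] by (auto simp: rdvd_def)
  then have j0: "j \<noteq> 0" using fg by auto
  have ord_j: "int m \<le> zorder j (of_nat m)" if "C \<le> m" for m
    using ord_fg[of m] ord_p[of m] that zorder_entire_mult[OF pD(1) jD pD(2) j0, of "of_nat m"]
    unfolding fgj C_def by linarith
  have "int (m - C) \<le> zorder j (of_nat m)" for m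
  proof (cases "C \<le> m")
    case True
    then show ?thesis using ord_j[of m] by linarith
  next
    case False
    then show ?thesis using zorder_entire_nonneg[OF jD j0] by simp
  qed
  then have "j \<in> linear_zeros_ideal" using mem_linear_zeros_ideal_iff[OF jD j0] by blast
  moreover have "\<forall>\<^sub>F m in sequentially. rdvd \<O> (root_power (of_nat m) m) j"
    using ord_j rdvd_root_power_iff[OF jD j0] eventually_sequentially by blast
  moreover have "p \<in> linear_zeros_ideal"
    using mem_linear_zeros_ideal_iff[OF pD] ord_p by auto
  ultimately show ?thesis
    using that fgj by (auto simp: eventual_linear_zeros_ideal_def mult.commute)
qed

lemma ideal_prod_eventual_linear_zeros:
  "ideal_prod \<O> eventual_linear_zeros_ideal linear_zeros_ideal
     = ideal_prod \<O> linear_zeros_ideal linear_zeros_ideal"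
  (is "ideal_prod \<O> ?J ?I = ideal_prod \<O> ?I ?I")
proof
  have ID: "?I \<subseteq> \<O>" and JD: "?J \<subseteq> \<O>"
    using is_ideal_linear_zeros_ideal is_ideal_eventual_linear_zeros_ideal by (auto simp: is_ideal_def)
  have JI: "?J \<subseteq> ?I" by (auto simp: eventual_linear_zeros_ideal_def)
  then show "ideal_prod \<O> ?J ?I \<subseteq> ideal_prod \<O> ?I ?I"
    unfolding ideal_prod_def by (intro entire.ideal_gen_mono) blast
  have ideal: "is_ideal \<O> (ideal_prod \<O> ?J ?I)"
    unfolding ideal_prod_def using JD ID by (intro entire.is_ideal_ideal_gen) auto
  have "f * g \<in> ideal_prod \<O> ?J ?I" if "f \<in> ?I" "g \<in> ?I" for f g
  proof (cases "f * g = 0")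
    case True
    then show ?thesis using ideal by (simp add: is_ideal_def)
  next
    case False
    then show ?thesis
      using linear_zeros_product_factor[OF that False] entire.mult_mem_ideal_prod[OF JD ID] by metis
  qed
  then show "ideal_prod \<O> ?I ?I \<subseteq> ideal_prod \<O> ?J ?I"
    unfolding ideal_prod_def[of _ ?I ?I] by (intro entire.ideal_gen_least[OF ideal]) blast
qed

lemma eventual_linear_zeros_t_reduction:
  "star_reduction t_closure \<O> eventual_linear_zeros_ideal linear_zeros_ideal"
  unfolding star_reduction_def
proof (intro conjI exI)
  show "eventual_linear_zeros_ideal \<subseteq> linear_zeros_ideal"
    by (auto simp: eventual_linear_zeros_ideal_def)
  show "t_closure \<O> (ideal_prod \<O> eventual_linear_zeros_ideal (ideal_pow \<O> linear_zeros_ideal 1))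
      = t_closure \<O> (ideal_pow \<O> linear_zeros_ideal (Suc 1))"
    using ideal_prod_eventual_linear_zeros
    by (simp only: entire.ideal_pow_one[OF is_ideal_linear_zeros_ideal] ideal_pow.simps(2))
qed (rule is_ideal_eventual_linear_zeros_ideal)

text \<open>A finitely generated subideal of J has a common threshold beyond which all its
  generators, hence its v-closure, have order at least m at m.\<close>

lemma t_closure_eventual_linear_zeros:
  assumes "d \<in> t_closure \<O> eventual_linear_zeros_ideal"
  shows "\<forall>\<^sub>F m in sequentially. rdvd \<O> (root_power (of_nat m) m) d"
proof -
  obtain K where K: "fin_gen_ideal \<O> K" "K \<subseteq> eventual_linear_zeros_ideal" "d \<in> v_closure \<O> K"
    using assms unfolding t_closure_def by blast
  then obtain F where F: "finite F" "F \<subseteq> \<O>" "K = ideal_gen \<O> F"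
    unfolding fin_gen_ideal_def by auto
  then have "F \<subseteq> eventual_linear_zeros_ideal"
    using entire.ideal_gen_superset[OF F(2)] K(2) by auto
  then have "\<forall>\<^sub>F m in sequentially. \<forall>f\<in>F. rdvd \<O> (root_power (of_nat m) m) f"
    using F(1) by (intro eventually_ball_finite) (auto simp: eventual_linear_zeros_ideal_def)
  then show ?thesis
  proof (rule eventually_mono)
    fix m assume "\<forall>f\<in>F. rdvd \<O> (root_power (of_nat m) m) f"
    then have "\<forall>x\<in>K. rdvd \<O> (root_power (of_nat m) m) x"
      using entire.rdvd_ideal_gen[OF F(2)] F(3) by blast
    then show "rdvd \<O> (root_power (of_nat m) m) d"
      using K(3) mem_v_closure_iff[of K] F entire.ideal_gen_subset by blast
  qed
qed

theorem entire_not_t_basic: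
  "\<exists>I. is_ideal \<O> I \<and> I \<noteq> {0} \<and> \<not> star_basic t_closure \<O> I"
proof -
  obtain p where pD: "p \<in> \<O>" "p \<noteq> 0" and ord_p: "\<And>m. zorder p (of_nat m) = int (m - 1)"
    using shifted_zeros_function[of 1] by metis
  have pI: "p \<in> linear_zeros_ideal" using mem_linear_zeros_ideal_iff[OF pD] ord_p by auto
  have "p \<notin> t_closure \<O> eventual_linear_zeros_ideal"
  proof
    assume "p \<in> t_closure \<O> eventual_linear_zeros_ideal"
    then obtain N where N: "\<And>m. m \<ge> N \<Longrightarrow> rdvd \<O> (root_power (of_nat m) m) p"
      using t_closure_eventual_linear_zeros unfolding eventually_sequentially by blast
    have "int (Suc N) \<le> zorder p (of_nat (Suc N))"
      using N[of "Suc N"] rdvd_root_power_iff[OF pD] by simp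
    then show False using ord_p[of "Suc N"] by simp
  qed
  moreover have "p \<in> t_closure \<O> linear_zeros_ideal"
    using entire.t_closure_superset[OF is_ideal_linear_zeros_ideal] pI by blast
  ultimately have "t_closure \<O> eventual_linear_zeros_ideal \<noteq> t_closure \<O> linear_zeros_ideal"
    by blast
  then have not_basic: "\<not> star_basic t_closure \<O> linear_zeros_ideal"
    using eventual_linear_zeros_t_reduction unfolding star_basic_def by blast
  have nonzero: "linear_zeros_ideal \<noteq> {0}" using pI pD by auto
  show ?thesis
    by (intro exI[of _ linear_zeros_ideal] conjI is_ideal_linear_zeros_ideal nonzero not_basic)
qed

theorem mainTheorem15:
  shows "completely_integrally_closed entire_functions
    \<and> (\<forall>I. is_ideal entire_functions I \<and> I \<noteq> {0} \<longrightarrow> star_basic v_closure entire_functions I)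
    \<and> \<not> (\<forall>I. is_ideal entire_functions I \<and> I \<noteq> {0} \<longrightarrow> star_basic t_closure entire_functions I)"
proof (intro conjI)
  show "\<forall>I. is_ideal \<O> I \<and> I \<noteq> {0} \<longrightarrow> star_basic v_closure \<O> I"
    using entire_v_basic by simp
  obtain I where "is_ideal \<O> I" "I \<noteq> {0}" "\<not> star_basic t_closure \<O> I"
    using entire_not_t_basic by auto
  then show "\<not> (\<forall>I. is_ideal \<O> I \<and> I \<noteq> {0} \<longrightarrow> star_basic t_closure \<O> I)"
    by auto
qed (rule entire_completely_integrally_closed)

end
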